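(* Let $X,Y$ be real Hilbert spaces, $A\colon X\to Y$ compact linear with $\|A\|=1$, let $X_N\subset X$ be a linear subspace of dimension $N$, and $A_N=A|_{X_N}$. Let $\rho>0$, $C>0$, and assume: (i) $x^\dagger=A^\ast z\in X_N$ for some $z\in\operatorname{range}(A_N)$ with $\|z\|\le\rho$; (ii) for all $0<\alpha\le1$, the operator norm of $(\alpha I+A^\ast A)^{-1}A^\ast$ restricted to $\operatorname{range}(A_N)$ (as a map $\operatorname{range}(A_N)\to X$) is at most $CN$. Let $y^\dagger=Ax^\dagger$, $\delta\ge0$, and $y^\delta\in Y$ with $\|y^\delta-y^\dagger\|\le\delta$. Then for every $0<\alpha\le1$, $$\|T_\alpha y^\delta-x^\dagger\|\le\frac{\delta}{2\sqrt\alpha}+\begin{cases}\frac{\sqrt\alpha}{2}\rho&\text{if } \frac{1}{2CN}<\sqrt\alpha\le1,\\[1mm] \alpha CN\rho&\text{if }\sqrt\alpha\le\frac{1}{2CN}.\end{cases}$$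
   Context: $A^\ast$ denotes the adjoint of $A$ and $T_\alpha y=(A^\ast A+\alpha I)^{-1}A^\ast y$ is Tikhonov regularization with parameter $\alpha>0$. *)

theory Defs
  imports "HOL-Analysis.Analysis"
begin

definition compact_operator :: "('a::real_normed_vector \<Rightarrow> 'b::real_normed_vector) \<Rightarrow> bool" where
  "compact_operator A \<longleftrightarrow> bounded_linear A \<and> compact (closure (A ` cball 0 1))"

definition subspace_of_dim :: "'a::real_vector set \<Rightarrow> nat \<Rightarrow> bool" where
  "subspace_of_dim V N \<longleftrightarrow> subspace V \<and>
     (\<exists>B. finite B \<and> independent B \<and> span B = V \<and> card B = N)"

definition tikhonov :: "('a::real_inner \<Rightarrow> 'b::real_inner) \<Rightarrow> real \<Rightarrow> 'b \<Rightarrow> 'a" where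
  "tikhonov A \<alpha> y = (THE x. adjoint A (A x) + \<alpha> *\<^sub>R x = adjoint A y)"

end

theory Submission
  imports Defs
begin

text \<open>
  The Tikhonov solution \<open>x = T\<^sub>\<alpha> y\<close> is characterised by the weak normal equation
  \<open>\<langle>A x, A v\<rangle> + \<alpha> \<langle>x, v\<rangle> = \<langle>y, A v\<rangle>\<close> for all \<open>v\<close>. Its solution is the minimiser of the
  uniformly convex functional \<open>\<parallel>A x\<parallel>\<^sup>2 + \<alpha> \<parallel>x\<parallel>\<^sup>2 - 2 \<langle>y, A x\<rangle>\<close>, which exists by completeness;
  the same argument gives the Riesz representation and hence the Hilbert space adjoint.
  Testing the equation with \<open>v = x\<close> yields \<open>\<parallel>T\<^sub>\<alpha> y\<parallel> \<le> \<parallel>y\<parallel> / (2 \<surd>\<alpha>)\<close>.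
  For \<open>x\<^sup>\<dagger> = A\<^sup>* z\<close> one has \<open>T\<^sub>\<alpha> (A x\<^sup>\<dagger>) - x\<^sup>\<dagger> = -\<alpha> T\<^sub>\<alpha> z\<close>, so the error is at most
  \<open>\<delta> / (2 \<surd>\<alpha>) + \<alpha> \<parallel>T\<^sub>\<alpha> z\<parallel>\<close>, and \<open>\<alpha> \<parallel>T\<^sub>\<alpha> z\<parallel>\<close> is bounded both by \<open>\<surd>\<alpha> \<rho> / 2\<close> and,
  by the stability hypothesis, by \<open>\<alpha> C N \<rho>\<close>. Both bounds hold for every \<open>\<alpha>\<close>; the case
  distinction only selects the better one, and of \<open>A\<close> only boundedness is needed.
\<close>

lemma uniformly_midconvex_attains_min:
  fixes J :: "'a::{real_normed_vector,complete_space} \<Rightarrow> real"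
  assumes cont: "continuous_on UNIV J" and bdd: "bdd_below (range J)" and c: "c > 0"
    and midconvex: "\<And>a b. c * (norm (a - b))\<^sup>2 \<le> J a + J b - 2 * J ((1/2) *\<^sub>R (a + b))"
  shows "\<exists>w. \<forall>x. J w \<le> J x"
proof -
  define m where "m = Inf (range J)"
  have m_le: "m \<le> J x" for x
    unfolding m_def using bdd by (simp add: cInf_lower)
  have "\<exists>x. J x < m + 1 / Suc n" for n
    using cInf_lessD[of "range J" "m + 1 / Suc n"] unfolding m_def by auto
  then obtain x where x: "\<And>n. J (x n) < m + 1 / Suc n"
    by metis
  have dist_x: "c * (norm (x n - x k))\<^sup>2 < 1 / Suc n + 1 / Suc k" for n k
    using midconvex[of "x n" "x k"] x[of n] x[of k] m_le[of "(1/2) *\<^sub>R (x n + x k)"] by linarith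
  have "Cauchy x"
  proof (rule CauchyI)
    fix e :: real assume "e > 0"
    then obtain N where N: "1 / Suc N < c * e\<^sup>2 / 2"
      using c by (metis reals_Archimedean inverse_eq_divide half_gt_zero mult_pos_pos zero_less_power)
    have "norm (x n - x k) < e" if "N \<le> n" "N \<le> k" for n k
    proof -
      have "1 / Suc n \<le> 1 / Suc N" "1 / Suc k \<le> 1 / Suc N"
        using that by (simp_all add: frac_le)
      then have "c * (norm (x n - x k))\<^sup>2 < c * e\<^sup>2"
        using dist_x[of n k] N by linarith
      then show ?thesis
        using c \<open>e > 0\<close> by (simp add: power_less_imp_less_base)
    qed
    then show "\<exists>N. \<forall>n\<ge>N. \<forall>k\<ge>N. norm (x n - x k) < e"
      by blast
  qed
  then obtain w where w: "x \<longlonglongrightarrow> w"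
    using Cauchy_convergent_iff convergent_def by blast
  have "(\<lambda>n. J (x n)) \<longlonglongrightarrow> J w"
    using continuous_on_tendsto_compose[OF cont w] by simp
  moreover have "(\<lambda>n. m + 1 / Suc n) \<longlonglongrightarrow> m"
    using LIMSEQ_inverse_real_of_nat_add[of m] by (simp add: inverse_eq_divide add.commute)
  ultimately have "J w \<le> m"
    using x by (intro LIMSEQ_le) (auto intro: less_imp_le)
  then show ?thesis
    using m_le order_trans by blast
qed

lemma linear_coeff_zero_if_quadratic_nonneg:
  fixes b c :: real
  assumes "\<And>t. 0 \<le> 2 * t * b + t\<^sup>2 * c"
  shows "b = 0"
proof (rule ccontr)
  assume "b \<noteq> 0"
  define t where "t = - b / (\<bar>c\<bar> + 1)"
  have b: "b = - t * (\<bar>c\<bar> + 1)"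
    unfolding t_def by (simp add: add_pos_nonneg)
  have "2 * t * b + t\<^sup>2 * c \<le> 2 * t * b + t\<^sup>2 * \<bar>c\<bar>"
    by (simp add: mult_left_mono)
  also have "\<dots> = - (t\<^sup>2 * (\<bar>c\<bar> + 2))"
    unfolding b by (simp add: power2_eq_square algebra_simps)
  also have "\<dots> < 0"
    using \<open>b \<noteq> 0\<close> b by (simp add: add_pos_nonneg)
  finally show False
    using assms[of t] by linarith
qed

lemma tikhonov_functional_has_minimizer:
  fixes A :: "'a::{real_inner,complete_space} \<Rightarrow> 'b::real_inner" and \<phi> :: "'a \<Rightarrow> real"
  assumes A: "bounded_linear A" and \<phi>: "bounded_linear \<phi>" and \<alpha>: "\<alpha> > 0"
  defines "J x \<equiv> A x \<bullet> A x + \<alpha> * (x \<bullet> x) - 2 * \<phi> x"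
  shows "\<exists>w. \<forall>x. J w \<le> J x"
proof -
  interpret A: bounded_linear A by fact
  interpret \<phi>: bounded_linear \<phi> by fact
  obtain K where K: "\<And>x. \<bar>\<phi> x\<bar> \<le> norm x * K"
    using \<phi>.bounded by auto
  have "continuous_on UNIV J"
    unfolding J_def by (intro continuous_intros A.continuous_on \<phi>.continuous_on)
  moreover have "bdd_below (range J)"
  proof
    fix y assume "y \<in> range J"
    then obtain x where "y = J x" by blast
    have "0 \<le> (\<alpha> * norm x - K)\<^sup>2 / \<alpha>"
      using \<alpha> by simp
    also have "\<dots> = \<alpha> * (norm x)\<^sup>2 - 2 * (norm x * K) + K\<^sup>2 / \<alpha>"
      using \<alpha> by (simp add: power2_eq_square field_simps)
    also have "\<dots> \<le> J x + K\<^sup>2 / \<alpha>"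
      using abs_le_D1[OF K[of x]] inner_ge_zero[of "A x"]
      unfolding J_def power2_norm_eq_inner by linarith
    finally show "- (K\<^sup>2 / \<alpha>) \<le> y"
      using \<open>y = J x\<close> by linarith
  qed
  moreover have "\<alpha> / 2 * (norm (a - b))\<^sup>2 \<le> J a + J b - 2 * J ((1/2) *\<^sub>R (a + b))" for a b
  proof -
    have "J a + J b - 2 * J ((1/2) *\<^sub>R (a + b)) = (A (a - b) \<bullet> A (a - b) + \<alpha> * ((a - b) \<bullet> (a - b))) / 2"
      unfolding J_def
      by (simp add: A.diff A.add A.scale \<phi>.add \<phi>.scale inner_diff_left inner_diff_right
          inner_add_left inner_add_right inner_commute algebra_simps)
    then show ?thesis
      by (simp add: power2_norm_eq_inner)
  qed
  ultimately show ?thesis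
    using uniformly_midconvex_attains_min[of J "\<alpha> / 2"] \<alpha> by auto
qed

lemma tikhonov_weak_solution_exists:
  fixes A :: "'a::{real_inner,complete_space} \<Rightarrow> 'b::real_inner" and \<phi> :: "'a \<Rightarrow> real"
  assumes A: "bounded_linear A" and \<phi>: "bounded_linear \<phi>" and \<alpha>: "\<alpha> > 0"
  shows "\<exists>w. \<forall>v. A w \<bullet> A v + \<alpha> * (w \<bullet> v) = \<phi> v"
proof -
  interpret A: bounded_linear A by fact
  interpret \<phi>: bounded_linear \<phi> by fact
  define J where "J x = A x \<bullet> A x + \<alpha> * (x \<bullet> x) - 2 * \<phi> x" for x
  obtain w where w_min: "\<And>x. J w \<le> J x"
    using tikhonov_functional_has_minimizer[OF A \<phi> \<alpha>] unfolding J_def by blast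
  have "A w \<bullet> A v + \<alpha> * (w \<bullet> v) - \<phi> v = 0" for v
  proof (rule linear_coeff_zero_if_quadratic_nonneg)
    fix t
    have "J (w + t *\<^sub>R v) =
        J w + 2 * t * (A w \<bullet> A v + \<alpha> * (w \<bullet> v) - \<phi> v) + t\<^sup>2 * (A v \<bullet> A v + \<alpha> * (v \<bullet> v))"
      unfolding J_def
      by (simp add: A.add A.scale \<phi>.add \<phi>.scale inner_add_left inner_add_right
          inner_commute power2_eq_square algebra_simps)
    then show "0 \<le> 2 * t * (A w \<bullet> A v + \<alpha> * (w \<bullet> v) - \<phi> v) + t\<^sup>2 * (A v \<bullet> A v + \<alpha> * (v \<bullet> v))"
      using w_min[of "w + t *\<^sub>R v"] by linarith
  qed
  then show ?thesis
    by auto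
qed

lemma riesz_representation:
  fixes \<phi> :: "'a::{real_inner,complete_space} \<Rightarrow> real"
  assumes "bounded_linear \<phi>"
  shows "\<exists>w. \<forall>x. \<phi> x = x \<bullet> w"
proof -
  obtain w where "\<And>v. w \<bullet> v = \<phi> v"
    using tikhonov_weak_solution_exists[OF bounded_linear_zero assms, of 1] by auto
  then show ?thesis
    by (metis inner_commute)
qed

lemma bounded_linear_adjoint_works:
  fixes A :: "'a::{real_inner,complete_space} \<Rightarrow> 'b::real_inner"
  assumes "bounded_linear A"
  shows "x \<bullet> adjoint A y = A x \<bullet> y"
proof -
  have "\<exists>w. \<forall>x. A x \<bullet> y = x \<bullet> w" for y
    using riesz_representation[OF bounded_linear_compose[OF bounded_linear_inner_left assms]]
    by simp
  then obtain f where f: "\<And>x y. A x \<bullet> y = x \<bullet> f y"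
    by metis
  show ?thesis
    unfolding adjoint_def by (rule someI2[where Q="\<lambda>f'. x \<bullet> f' y = A x \<bullet> y"]) (use f in auto)
qed

lemma tikhonov_eq_iff:
  fixes A :: "'a::{real_inner,complete_space} \<Rightarrow> 'b::real_inner"
  assumes A: "bounded_linear A" and \<alpha>: "\<alpha> > 0"
  shows "tikhonov A \<alpha> y = x \<longleftrightarrow> (\<forall>v. A x \<bullet> A v + \<alpha> * (x \<bullet> v) = y \<bullet> A v)"
proof -
  interpret A: bounded_linear A by fact
  define weak where "weak x \<longleftrightarrow> (\<forall>v. A x \<bullet> A v + \<alpha> * (x \<bullet> v) = y \<bullet> A v)" for x
  have normal_iff_weak: "adjoint A (A x) + \<alpha> *\<^sub>R x = adjoint A y \<longleftrightarrow> weak x" for x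
  proof -
    have "v \<bullet> (adjoint A (A x) + \<alpha> *\<^sub>R x) = A x \<bullet> A v + \<alpha> * (x \<bullet> v)"
      and "v \<bullet> adjoint A y = y \<bullet> A v" for v
      by (simp_all add: inner_add_right bounded_linear_adjoint_works[OF A]
          inner_commute[of v x] inner_commute[of "A v"])
    then show ?thesis
      unfolding weak_def vector_eq_ldot[of "adjoint A (A x) + \<alpha> *\<^sub>R x", symmetric] by presburger
  qed
  have weak_unique: "x = x'" if "weak x" "weak x'" for x x'
  proof -
    define d where "d = x - x'"
    have "A x \<bullet> A d + \<alpha> * (x \<bullet> d) = A x' \<bullet> A d + \<alpha> * (x' \<bullet> d)"
      by (simp only: that[unfolded weak_def, rule_format])
    then have "A d \<bullet> A d + \<alpha> * (d \<bullet> d) = 0"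
      unfolding d_def by (simp add: A.diff inner_diff_left algebra_simps)
    moreover have "0 \<le> A d \<bullet> A d" "0 \<le> \<alpha> * (d \<bullet> d)"
      using \<alpha> by simp_all
    ultimately have "\<alpha> * (d \<bullet> d) = 0"
      by linarith
    then show ?thesis
      using \<alpha> unfolding d_def by simp
  qed
  obtain w where "weak w"
    using tikhonov_weak_solution_exists[OF A bounded_linear_compose[OF bounded_linear_inner_right A] \<alpha>]
    unfolding weak_def o_def by blast
  have "tikhonov A \<alpha> y = w"
    unfolding tikhonov_def normal_iff_weak
  proof (rule the_equality)
    show "weak w" by fact
  next
    show "x = w" if "weak x" for x
      using that \<open>weak w\<close> by (rule weak_unique)
  qed
  then show ?thesis
    using \<open>weak w\<close> weak_unique unfolding weak_def by blast
qed

lemma tikhonov_weak_eq: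
  fixes A :: "'a::{real_inner,complete_space} \<Rightarrow> 'b::real_inner"
  assumes "bounded_linear A" and "\<alpha> > 0"
  shows "A (tikhonov A \<alpha> y) \<bullet> A v + \<alpha> * (tikhonov A \<alpha> y \<bullet> v) = y \<bullet> A v"
  using tikhonov_eq_iff[OF assms] by blast

lemma linear_tikhonov:
  fixes A :: "'a::{real_inner,complete_space} \<Rightarrow> 'b::real_inner"
  assumes A: "bounded_linear A" and \<alpha>: "\<alpha> > 0"
  shows "linear (tikhonov A \<alpha>)"
proof -
  interpret A: bounded_linear A by fact
  let ?T = "tikhonov A \<alpha>"
  show ?thesis
  proof (rule linearI)
    fix b1 b2
    have "A (?T b1 + ?T b2) \<bullet> A v + \<alpha> * ((?T b1 + ?T b2) \<bullet> v) =
        (A (?T b1) \<bullet> A v + \<alpha> * (?T b1 \<bullet> v)) + (A (?T b2) \<bullet> A v + \<alpha> * (?T b2 \<bullet> v))" for v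
      by (simp add: A.add inner_add_left algebra_simps)
    then show "?T (b1 + b2) = ?T b1 + ?T b2"
      by (simp add: tikhonov_eq_iff[OF A \<alpha>] tikhonov_weak_eq[OF A \<alpha>] inner_add_left)
  next
    fix r b
    have "A (r *\<^sub>R ?T b) \<bullet> A v + \<alpha> * (r *\<^sub>R ?T b \<bullet> v) = r * (A (?T b) \<bullet> A v + \<alpha> * (?T b \<bullet> v))" for v
      by (simp add: A.scale algebra_simps)
    then show "?T (r *\<^sub>R b) = r *\<^sub>R ?T b"
      by (simp add: tikhonov_eq_iff[OF A \<alpha>] tikhonov_weak_eq[OF A \<alpha>])
  qed
qed

lemma norm_tikhonov_le:
  fixes A :: "'a::{real_inner,complete_space} \<Rightarrow> 'b::real_inner"
  assumes A: "bounded_linear A" and \<alpha>: "\<alpha> > 0"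
  shows "norm (tikhonov A \<alpha> y) \<le> norm y / (2 * sqrt \<alpha>)"
proof -
  define x where "x = tikhonov A \<alpha> y"
  have "(norm (A x))\<^sup>2 + \<alpha> * (norm x)\<^sup>2 = y \<bullet> A x"
    using tikhonov_weak_eq[OF A \<alpha>, of y x] unfolding x_def by (simp add: power2_norm_eq_inner)
  also have "\<dots> \<le> norm y * norm (A x)"
    by (rule norm_cauchy_schwarz)
  also have "\<dots> \<le> (norm (A x))\<^sup>2 + (norm y)\<^sup>2 / 4"
    using sum_squares_ge_zero[of "norm (A x) - norm y / 2" 0]
    by (simp add: power2_eq_square algebra_simps)
  finally have "(2 * sqrt \<alpha> * norm x)\<^sup>2 \<le> (norm y)\<^sup>2"
    using \<alpha> by (simp add: power_mult_distrib)
  then have "2 * sqrt \<alpha> * norm x \<le> norm y"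
    by (rule power2_le_imp_le) simp
  then show ?thesis
    using \<alpha> unfolding x_def by (simp add: field_simps)
qed

lemma tikhonov_source_residual:
  fixes A :: "'a::{real_inner,complete_space} \<Rightarrow> 'b::real_inner"
  assumes A: "bounded_linear A" and \<alpha>: "\<alpha> > 0"
  shows "tikhonov A \<alpha> (A (adjoint A z)) - adjoint A z = - \<alpha> *\<^sub>R tikhonov A \<alpha> z"
proof -
  interpret A: bounded_linear A by fact
  let ?x = "adjoint A z" and ?u = "tikhonov A \<alpha> z"
  have "A (?x - \<alpha> *\<^sub>R ?u) \<bullet> A v + \<alpha> * ((?x - \<alpha> *\<^sub>R ?u) \<bullet> v) =
      A ?x \<bullet> A v - \<alpha> * (A ?u \<bullet> A v + \<alpha> * (?u \<bullet> v)) + \<alpha> * (v \<bullet> ?x)" for v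
    by (simp add: A.diff A.scale inner_diff_left inner_commute[of v] algebra_simps)
  then have "tikhonov A \<alpha> (A ?x) = ?x - \<alpha> *\<^sub>R ?u"
    by (simp add: tikhonov_eq_iff[OF A \<alpha>] tikhonov_weak_eq[OF A \<alpha>]
        bounded_linear_adjoint_works[OF A] inner_commute[of z])
  then show ?thesis
    by simp
qed

lemma tikhonov_source_error_le:
  fixes A :: "'a::{real_inner,complete_space} \<Rightarrow> 'b::real_inner"
  assumes A: "bounded_linear A" and \<alpha>: "\<alpha> > 0"
  shows "norm (tikhonov A \<alpha> y - adjoint A z) \<le>
    norm (y - A (adjoint A z)) / (2 * sqrt \<alpha>) + \<alpha> * norm (tikhonov A \<alpha> z)"
proof -
  let ?T = "tikhonov A \<alpha>" and ?x = "adjoint A z"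
  have "?T y - ?x = ?T (y - A ?x) + (?T (A ?x) - ?x)"
    using linear_diff[OF linear_tikhonov[OF A \<alpha>]] by simp
  also have "\<dots> = ?T (y - A ?x) - \<alpha> *\<^sub>R ?T z"
    by (simp add: tikhonov_source_residual[OF A \<alpha>])
  finally have "norm (?T y - ?x) \<le> norm (?T (y - A ?x)) + \<alpha> * norm (?T z)"
    using norm_triangle_ineq4[of "?T (y - A ?x)" "\<alpha> *\<^sub>R ?T z"] \<alpha> by simp
  then show ?thesis
    using norm_tikhonov_le[OF A \<alpha>, of "y - A ?x"] by linarith
qed

theorem theorem2:
  fixes A :: "'x::{real_inner,complete_space} \<Rightarrow> 'y::{real_inner,complete_space}"
    and XN :: "'x set" and N :: nat
    and \<rho> C \<delta> \<alpha> :: real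
    and z :: 'y and xdag :: 'x and ydelta :: 'y
  assumes compA: "compact_operator A"
    and normA: "onorm A = 1"
    and XN: "subspace_of_dim XN N"
    and rho: "\<rho> > 0" and Cpos: "C > 0"
    and src: "xdag = adjoint A z" "xdag \<in> XN" "z \<in> A ` XN" "norm z \<le> \<rho>"
    and stab: "\<And>\<beta> y. 0 < \<beta> \<Longrightarrow> \<beta> \<le> 1 \<Longrightarrow> y \<in> A ` XN \<Longrightarrow>
                 norm (tikhonov A \<beta> y) \<le> C * real N * norm y"
    and delta: "\<delta> \<ge> 0"
    and noise: "norm (ydelta - A xdag) \<le> \<delta>"
    and alpha: "0 < \<alpha>" "\<alpha> \<le> 1"
  shows "norm (tikhonov A \<alpha> ydelta - xdag) \<le>
           \<delta> / (2 * sqrt \<alpha>) +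
           (if 1 / (2 * C * real N) < sqrt \<alpha> then sqrt \<alpha> / 2 * \<rho>
            else \<alpha> * C * real N * \<rho>)"
proof -
  have A: "bounded_linear A"
    using compA unfolding compact_operator_def by blast
  let ?u = "tikhonov A \<alpha> z"
  have "norm (ydelta - A xdag) / (2 * sqrt \<alpha>) \<le> \<delta> / (2 * sqrt \<alpha>)"
    using noise by (rule divide_right_mono) (use alpha(1) in simp)
  then have "norm (tikhonov A \<alpha> ydelta - xdag) \<le> \<delta> / (2 * sqrt \<alpha>) + \<alpha> * norm ?u"
    using tikhonov_source_error_le[OF A alpha(1), of ydelta z] src(1) by simp
  moreover have "\<alpha> * norm ?u \<le> sqrt \<alpha> / 2 * \<rho>"
  proof -
    have "\<alpha> * norm ?u \<le> \<alpha> * (norm z / (2 * sqrt \<alpha>))"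
      by (rule mult_left_mono[OF norm_tikhonov_le[OF A alpha(1)]]) (use alpha(1) in simp)
    also have "\<dots> = \<alpha> / sqrt \<alpha> / 2 * norm z"
      by simp
    also have "\<dots> \<le> sqrt \<alpha> / 2 * \<rho>"
      using src(4) alpha(1) by (simp add: real_div_sqrt)
    finally show ?thesis .
  qed
  moreover have "\<alpha> * norm ?u \<le> \<alpha> * C * real N * \<rho>"
  proof -
    have "norm ?u \<le> C * real N * norm z"
      using stab[OF alpha src(3)] .
    also have "\<dots> \<le> C * real N * \<rho>"
      using src(4) Cpos by (simp add: mult_left_mono)
    finally show ?thesis
      using alpha(1) by (simp add: mult_left_mono mult.assoc)
  qed
  ultimately show ?thesis
    by simp
qed

end
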